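(* For a positive integer $X$, let $N_X$ denote the number of distinct orbits $o(\mathbf{x})$, $\mathbf{x}\in\mathbb{Z}^2$, with $\operatorname{length}(o(\mathbf{x}))=X$. Then $N_X=0$ if $4\nmid X$, and $$N_X=\Big\lfloor\frac X6\Big\rfloor-\Big\lceil\frac X{12}\Big\rceil+1\quad\text{if } 4\mid X.$$
   Context: Define $\mathcal K_1(x_1,x_2)=(-x_1+x_2,x_2)$ and $\mathcal K_2(x_1,x_2)=(x_1,x_1-x_2)$ on $\mathbb{Z}^2$. The orbit $o(\mathbf{x})$ is the set of points obtained from $\mathbf{x}$ by repeated application of $\mathcal K_1,\mathcal K_2$: $(x_1,x_2)$, $(-x_1+x_2,x_2)$, $(-x_1+x_2,-x_1)$, $(-x_2,-x_1)$, $(-x_2,x_1-x_2)$, $(x_1,x_1-x_2)$. Orbits partition $\mathbb{Z}^2$. The length of the orbit is the Euclidean length of the closed path through the six points in the listed order: $$\operatorname{length}(o(\mathbf{x}))=2\big(|2x_1-x_2|+|x_1+x_2|+|2x_2-x_1|\big).$$ *)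

theory Defs
  imports Complex_Main
begin

definition K1 :: "int \<times> int \<Rightarrow> int \<times> int" where
  "K1 p = (- fst p + snd p, snd p)"

definition K2 :: "int \<times> int \<Rightarrow> int \<times> int" where
  "K2 p = (fst p, fst p - snd p)"

definition Kstep :: "int \<times> int \<Rightarrow> int \<times> int \<Rightarrow> bool" where
  "Kstep p q \<longleftrightarrow> q = K1 p \<or> q = K2 p"

definition orbit :: "int \<times> int \<Rightarrow> (int \<times> int) set" where
  "orbit x = {y. Kstep\<^sup>*\<^sup>* x y}"

text \<open>Length of the orbit of x (closed path through the six listed points).\<close>
definition orbit_length :: "int \<times> int \<Rightarrow> int" where
  "orbit_length x = 2 * (\<bar>2 * fst x - snd x\<bar> + \<bar>fst x + snd x\<bar> + \<bar>2 * snd x - fst x\<bar>)"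

definition orbits_of_length :: "int \<Rightarrow> (int \<times> int) set set" where
  "orbits_of_length X = {S. \<exists>x. S = orbit x \<and> orbit_length x = X}"

end

theory Submission
  imports Defs
begin

(* The orbit of (a, b) is exactly its six listed points, and the length is invariant along it.
   Every orbit meets the cone b \<le> 2a, a \<le> 2b in exactly one point, where the length equals
   4(a + b); so for X = 4n the orbits of length X correspond to the points (a, n - a) of the cone,
   i.e. to the integers a with X/12 \<le> a \<le> X/6. *)

definition hexagon :: "int \<times> int \<Rightarrow> (int \<times> int) set" where
  "hexagon p = (case p of (a, b) \<Rightarrow>
     {(a, b), (b - a, b), (b - a, - a), (- b, - a), (- b, a - b), (a, a - b)})"

definition cone :: "(int \<times> int) set" where
  "cone = {(a, b). b \<le> 2 * a \<and> a \<le> 2 * b}"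

lemma hexagon_sym: "y \<in> hexagon x \<Longrightarrow> x \<in> hexagon y"
  by (cases x) (auto simp: hexagon_def)

lemma hexagon_Kstep_closed: "y \<in> hexagon x \<Longrightarrow> Kstep y z \<Longrightarrow> z \<in> hexagon x"
  by (cases x) (auto simp: hexagon_def Kstep_def K1_def K2_def)

lemma hexagon_Kstep_path:
  assumes "y \<in> hexagon x"
  shows "Kstep\<^sup>*\<^sup>* x y"
proof -
  obtain a b where x: "x = (a, b)" by (cases x)
  have "Kstep (a, b) (b - a, b)" "Kstep (b - a, b) (b - a, - a)" "Kstep (b - a, - a) (- b, - a)"
    "Kstep (- b, - a) (- b, a - b)" "Kstep (a, b) (a, a - b)"
    by (simp_all add: Kstep_def K1_def K2_def)
  then show ?thesis
    using assms unfolding x hexagon_def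
    by (simp only: prod.case insert_iff empty_iff)
      (meson converse_rtranclp_into_rtranclp rtranclp.rtrancl_refl)
qed

lemma orbit_eq_hexagon: "orbit x = hexagon x"
proof (intro set_eqI iffI)
  fix y assume "y \<in> orbit x"
  then have "Kstep\<^sup>*\<^sup>* x y" by (simp add: orbit_def)
  then show "y \<in> hexagon x"
  proof (induction rule: rtranclp_induct)
    case base
    then show ?case by (cases x) (simp add: hexagon_def)
  next
    case (step y z)
    then show ?case using hexagon_Kstep_closed by blast
  qed
qed (simp add: orbit_def hexagon_Kstep_path)

lemma orbit_eq_if_mem:
  assumes "y \<in> orbit x"
  shows "orbit y = orbit x"
proof -
  have "Kstep\<^sup>*\<^sup>* x y" "Kstep\<^sup>*\<^sup>* y x"
    using assms hexagon_sym by (auto simp: orbit_eq_hexagon hexagon_Kstep_path)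
  then show ?thesis by (auto simp: orbit_def intro: rtranclp_trans)
qed

lemma orbit_length_Kstep: "Kstep p q \<Longrightarrow> orbit_length q = orbit_length p"
  by (cases p) (auto simp: Kstep_def K1_def K2_def orbit_length_def; arith)

lemma orbit_length_eq_if_mem:
  assumes "y \<in> orbit x"
  shows "orbit_length y = orbit_length x"
proof -
  have "Kstep\<^sup>*\<^sup>* x y" using assms by (simp add: orbit_def)
  then show ?thesis by (induction rule: rtranclp_induct) (auto dest: orbit_length_Kstep)
qed

lemma hexagon_meets_cone: "\<exists>p \<in> cone. p \<in> hexagon x"
proof -
  obtain a b where x: "x = (a, b)" by (cases x)
  consider "b \<le> 2 * a \<and> a \<le> 2 * b" | "2 * a \<le> b \<and> - a \<le> b" | "a \<le> 2 * b \<and> b \<le> - a"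
    | "2 * b \<le> a \<and> 2 * a \<le> b" | "a \<le> - b \<and> b \<le> 2 * a" | "- b \<le> a \<and> 2 * b \<le> a"
    by arith
  then show ?thesis
  proof cases
    case 1 then show ?thesis by (intro bexI[of _ "(a, b)"]) (auto simp: x hexagon_def cone_def)
  next
    case 2 then show ?thesis by (intro bexI[of _ "(b - a, b)"]) (auto simp: x hexagon_def cone_def)
  next
    case 3 then show ?thesis by (intro bexI[of _ "(b - a, - a)"]) (auto simp: x hexagon_def cone_def)
  next
    case 4 then show ?thesis by (intro bexI[of _ "(- b, - a)"]) (auto simp: x hexagon_def cone_def)
  next
    case 5 then show ?thesis by (intro bexI[of _ "(- b, a - b)"]) (auto simp: x hexagon_def cone_def)
  next
    case 6 then show ?thesis by (intro bexI[of _ "(a, a - b)"]) (auto simp: x hexagon_def cone_def)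
  qed
qed

lemma cone_hexagon_unique: "p \<in> cone \<Longrightarrow> q \<in> cone \<Longrightarrow> q \<in> hexagon p \<Longrightarrow> q = p"
  by (cases p) (auto simp: cone_def hexagon_def)

lemma inj_on_orbit_cone: "inj_on orbit cone"
proof (rule inj_onI)
  fix p q assume "p \<in> cone" "q \<in> cone" "orbit p = orbit q"
  then have "q \<in> hexagon p" by (simp add: orbit_eq_hexagon hexagon_def split: prod.splits)
  with \<open>p \<in> cone\<close> \<open>q \<in> cone\<close> show "p = q" by (blast dest: cone_hexagon_unique)
qed

lemma orbits_of_length_eq_image_cone:
  "orbits_of_length X = orbit ` {p \<in> cone. orbit_length p = X}"
proof (intro set_eqI iffI)
  fix S assume "S \<in> orbits_of_length X"
  then obtain x where S: "S = orbit x" and len: "orbit_length x = X"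
    by (auto simp: orbits_of_length_def)
  obtain p where "p \<in> cone" "p \<in> orbit x"
    using hexagon_meets_cone orbit_eq_hexagon by blast
  then show "S \<in> orbit ` {p \<in> cone. orbit_length p = X}"
    using S len orbit_eq_if_mem orbit_length_eq_if_mem by (metis (mono_tags) image_eqI mem_Collect_eq)
qed (auto simp: orbits_of_length_def)

lemma orbit_length_cone: "p \<in> cone \<Longrightarrow> orbit_length p = 4 * (fst p + snd p)"
  by (cases p) (auto simp: cone_def orbit_length_def)

lemma cone_level_set:
  fixes X :: int
  assumes "4 dvd X"
  shows "{p \<in> cone. orbit_length p = X} = (\<lambda>a. (a, X div 4 - a)) ` {\<lceil>X / 12\<rceil> .. \<lfloor>X / 6\<rfloor>}"
proof -
  have "(a, b) \<in> cone \<and> orbit_length (a, b) = X \<longleftrightarrow>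
        b = X div 4 - a \<and> \<lceil>X / 12\<rceil> \<le> a \<and> a \<le> \<lfloor>X / 6\<rfloor>" for a b
  proof -
    have "\<lceil>X / 12\<rceil> \<le> a \<longleftrightarrow> X \<le> 12 * a"
      unfolding ceiling_le_iff by (simp add: divide_le_eq) linarith
    moreover have "a \<le> \<lfloor>X / 6\<rfloor> \<longleftrightarrow> 6 * a \<le> X"
      unfolding le_floor_iff by (simp add: le_divide_eq) linarith
    ultimately show ?thesis
      using assms by (auto simp: cone_def orbit_length_def)
  qed
  then show ?thesis by (auto simp: set_eq_iff image_iff)
qed

lemma cone_level_set_empty: "\<not> 4 dvd X \<Longrightarrow> {p \<in> cone. orbit_length p = X} = {}"
  using orbit_length_cone by fastforce

theorem mainTheorem16:
  fixes X :: int
  assumes "X > 0"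
  shows "finite (orbits_of_length X) \<and>
         (\<not> 4 dvd X \<longrightarrow> card (orbits_of_length X) = 0) \<and>
         (4 dvd X \<longrightarrow> int (card (orbits_of_length X)) = floor (real_of_int X / 6) - ceiling (real_of_int X / 12) + 1)"
proof (cases "4 dvd X")
  case True
  let ?I = "{\<lceil>X / 12\<rceil> .. \<lfloor>X / 6\<rfloor>}"
  have reps: "orbits_of_length X = orbit ` (\<lambda>a. (a, X div 4 - a)) ` ?I"
    using orbits_of_length_eq_image_cone cone_level_set[OF True] by simp
  have "inj_on (orbit \<circ> (\<lambda>a. (a, X div 4 - a))) ?I"
    using inj_on_subset[OF inj_on_orbit_cone] cone_level_set[OF True]
    by (intro comp_inj_on) (auto intro: inj_onI)
  then have "card (orbits_of_length X) = card ?I"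
    unfolding reps image_comp by (rule card_image)
  moreover have "\<lceil>X / 12\<rceil> - 1 \<le> \<lfloor>X / 6\<rfloor>"
    using assms ceiling_correct[of "X / 12"] by linarith
  ultimately show ?thesis using True reps by simp
next
  case False
  then show ?thesis by (simp add: orbits_of_length_eq_image_cone cone_level_set_empty)
qed

end
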